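(* Let $X_0\in\mathcal{D}^0$. Then system (S) has a unique solution $X(t)=(B(t),I(t),M(t),N(t))$ defined on $[0,+\infty)$ with $X(0)=X_0$. Moreover $X(t)\in\mathcal{D}^0$ for every $t>0$, $$\frac{b}{m+\mu}\le \liminf_{t\to+\infty}\big(B(t)+I(t)\big)\le \limsup_{t\to+\infty}\big(B(t)+I(t)\big)\le \frac{b}{m},$$ and there is a constant $L>0$ (which may depend on $X_0$) such that $M(t)+N(t)\le L$ for all $t\ge 0$.
   Context: All parameters $b,\lambda,\gamma,m,\mu,r,n,p,h,\beta,\delta,e$ are positive constants. Here $B,I$ denote healthy and infected bees and $M,N$ healthy and infected mites. The model (S) is $$B'=\frac{bB}{B+I}-\lambda BN-\gamma BI-mB,\qquad I'=\frac{bI}{B+I}+\lambda BN+\gamma BI-(m+\mu)I,$$ $$M'=r(M+N)-nM-\frac{p}{h(B+I)}M(M+N)-M(\beta I+\delta N+eB),$$ $$N'=-nN-\frac{p}{h(B+I)}N(M+N)+\beta MI+\delta MN-eNB,$$ considered on the domain $\mathcal{D}^0=\{(B,I,M,N)\in\mathbb{R}^4_+ : B+I\neq 0\}$, where $\mathbb{R}_+=[0,\infty)$. *)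

theory Defs
  imports "HOL-Analysis.Analysis" "HOL-Library.Extended_Real" "HOL-Library.Liminf_Limsup"
begin

definition D0 :: "(real \<times> real \<times> real \<times> real) set" where
  "D0 = {(B, I, M, N). B \<ge> 0 \<and> I \<ge> 0 \<and> M \<ge> 0 \<and> N \<ge> 0 \<and> B + I \<noteq> 0}"

definition bee_solution ::
  "real \<Rightarrow> real \<Rightarrow> real \<Rightarrow> real \<Rightarrow> real \<Rightarrow> real \<Rightarrow> real \<Rightarrow> real \<Rightarrow> real \<Rightarrow> real \<Rightarrow> real \<Rightarrow> real \<Rightarrow>
   (real \<Rightarrow> real) \<Rightarrow> (real \<Rightarrow> real) \<Rightarrow> (real \<Rightarrow> real) \<Rightarrow> (real \<Rightarrow> real) \<Rightarrow> bool" where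
  "bee_solution b lam gam m mu r n p h beta delta e B I M N \<longleftrightarrow>
    (\<forall>t\<ge>0. B t + I t \<noteq> 0 \<and>
      (B has_real_derivative
         (b * B t / (B t + I t) - lam * B t * N t - gam * B t * I t - m * B t)) (at t within {0..}) \<and>
      (I has_real_derivative
         (b * I t / (B t + I t) + lam * B t * N t + gam * B t * I t - (m + mu) * I t)) (at t within {0..}) \<and>
      (M has_real_derivative
         (r * (M t + N t) - n * M t - p / (h * (B t + I t)) * M t * (M t + N t)
          - M t * (beta * I t + delta * N t + e * B t))) (at t within {0..}) \<and>
      (N has_real_derivative
         (- n * N t - p / (h * (B t + I t)) * N t * (M t + N t) + beta * M t * I t
          + delta * M t * N t - e * N t * B t)) (at t within {0..}))"

end

theory Submission
  imports Defs
begin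

text \<open>Clipping the state to a box and bounding B + I away from 0 turns (S) into a system with a globally
  Lipschitz right-hand side, which Picard iteration solves on [0, +\<infinity>). Barrier arguments show that
  this solution never leaves the region where the truncation is inactive: all coordinates stay
  nonnegative, the total bee population S = B + I satisfies b - (m + \<mu>) S \<le> S' \<le> b - m S and hence
  stays between min (S(0), b/(m + \<mu>)) and max (S(0), b/m), and the total mite population M + N
  satisfies (M + N)' = (M + N) (r - n - p (M + N) / (h S) - e B), which is negative once
  M + N > h r max (S(0), b/m) / p. So it solves (S). Comparing S with the solutions of the two linear
  equations gives the bounds on its lim inf and lim sup. Uniqueness follows from a Gronwall estimate,
  the field of (S) being Lipschitz on every compact set where B + I is bounded away from 0.\<close>

section \<open>Differential inequalities\<close>

lemma continuous_on_if_has_real_derivative_within: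
  fixes f :: "real \<Rightarrow> real"
  assumes "\<And>t. t \<in> S \<Longrightarrow> (f has_real_derivative f' t) (at t within T)" "S \<subseteq> T"
  shows "continuous_on S f"
  unfolding continuous_on_eq_continuous_within
  using assms by (metis DERIV_continuous continuous_within_subset)

lemma has_real_derivative_at_if_within_nonneg:
  assumes "(f has_real_derivative D) (at t within {0..})" "0 < t"
  shows "(f has_real_derivative D) (at t)"
proof -
  have "at t within {0..} = at t"
    using assms(2) by (intro at_within_interior) simp
  then show ?thesis
    using assms(1) by simp
qed

lemma nondecreasing_if_deriv_nonneg:
  fixes g :: "real \<Rightarrow> real"
  assumes deriv: "\<And>t. a \<le> t \<Longrightarrow> t \<le> b \<Longrightarrow> (g has_real_derivative g' t) (at t within {0..})"
    and nonneg: "\<And>t. a < t \<Longrightarrow> t < b \<Longrightarrow> g' t \<ge> 0" and "0 \<le> a" "a \<le> b"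
  shows "g a \<le> g b"
proof (rule DERIV_nonneg_imp_increasing_open[OF \<open>a \<le> b\<close>])
  show "continuous_on {a..b} g"
  proof (rule continuous_on_if_has_real_derivative_within)
    show "(g has_real_derivative g' t) (at t within {0..})" if "t \<in> {a..b}" for t
      using that by (intro deriv) auto
  qed (use \<open>0 \<le> a\<close> in auto)
  show "\<exists>y. (g has_real_derivative y) (at t) \<and> 0 \<le> y" if "a < t" "t < b" for t
  proof (intro exI conjI)
    show "(g has_real_derivative g' t) (at t)"
      using that \<open>0 \<le> a\<close> by (intro has_real_derivative_at_if_within_nonneg deriv) auto
    show "0 \<le> g' t"
      using nonneg that .
  qed
qed

text \<open>After the last time before t1 at which f \<ge> a, f stays below a and so is nondecreasing.\<close>
lemma lower_barrier:
  fixes f :: "real \<Rightarrow> real"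
  assumes deriv: "\<And>t. 0 \<le> t \<Longrightarrow> (f has_real_derivative f' t) (at t within {0..})"
    and "f 0 \<ge> a" and pushes_up: "\<And>t. 0 \<le> t \<Longrightarrow> f t < a \<Longrightarrow> f' t \<ge> 0" and "0 \<le> t1"
  shows "f t1 \<ge> a"
proof (rule ccontr)
  assume below_t1: "\<not> f t1 \<ge> a"
  define S where "S = {0..t1} \<inter> f -` {a..}"
  have "continuous_on {0..t1} f"
    by (rule continuous_on_if_has_real_derivative_within[where T="{0..}" and f'=f'])
      (use deriv in auto)
  then have "closed S"
    unfolding S_def by (rule continuous_closed_preimage) simp_all
  moreover have "0 \<in> S"
    using \<open>f 0 \<ge> a\<close> \<open>0 \<le> t1\<close> by (simp add: S_def)
  moreover have "bdd_above S"
    unfolding S_def by (rule bdd_aboveI[of _ t1]) simp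
  ultimately have "Sup S \<in> S"
    using closed_contains_Sup by blast
  define t0 where "t0 = Sup S"
  have t0: "0 \<le> t0" "t0 \<le> t1" "f t0 \<ge> a"
    using \<open>Sup S \<in> S\<close> by (simp_all add: S_def t0_def)
  have below: "f s < a" if "t0 < s" "s \<le> t1" for s
  proof (rule ccontr)
    assume "\<not> f s < a"
    then have "s \<in> S"
      using that t0 by (simp add: S_def)
    then have "s \<le> t0"
      unfolding t0_def using \<open>bdd_above S\<close> by (rule cSup_upper)
    then show False
      using that by simp
  qed
  have "f t0 \<le> f t1"
  proof (rule nondecreasing_if_deriv_nonneg[where g=f and g'=f'])
    show "(f has_real_derivative f' s) (at s within {0..})" if "t0 \<le> s" "s \<le> t1" for s
      using deriv that t0 by simp
    show "f' s \<ge> 0" if "t0 < s" "s < t1" for s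
      using pushes_up below that t0 by simp
  qed (use t0 in simp_all)
  then show False
    using below_t1 t0 by simp
qed

text \<open>The right-hand side is the solution of y' = b - c y with y 0 = f 0.\<close>
lemma linear_differential_inequality:
  fixes f :: "real \<Rightarrow> real"
  assumes deriv: "\<And>t. 0 \<le> t \<Longrightarrow> (f has_real_derivative f' t) (at t within {0..})"
    and ineq: "\<And>t. 0 \<le> t \<Longrightarrow> f' t \<ge> b - c * f t" and "c > 0" and "0 \<le> t"
  shows "f t \<ge> b / c + (f 0 - b / c) * exp (- c * t)"
proof -
  define g where "g s = (f s - b / c) * exp (c * s)" for s
  have "(g has_real_derivative (f' s - (b - c * f s)) * exp (c * s)) (at s within {0..})"
    if "0 \<le> s" for s
  proof -
    have "(g has_real_derivative f' s * exp (c * s) + (f s - b / c) * (exp (c * s) * c))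
        (at s within {0..})"
      unfolding g_def by (auto intro!: derivative_eq_intros deriv that)
    moreover have "f' s * exp (c * s) + (f s - b / c) * (exp (c * s) * c)
        = (f' s - (b - c * f s)) * exp (c * s)"
      using \<open>c > 0\<close> by (simp add: field_simps)
    ultimately show ?thesis
      by simp
  qed
  then have "g 0 \<le> g t"
    by (rule nondecreasing_if_deriv_nonneg) (use ineq \<open>0 \<le> t\<close> in auto)
  then have "(f 0 - b / c) * exp (- c * t) \<le> g t * exp (- c * t)"
    by (simp add: g_def)
  also have "\<dots> = f t - b / c"
    by (simp add: g_def mult.assoc flip: exp_add)
  finally show ?thesis
    by simp
qed

lemma exp_neg_tendsto_zero:
  assumes "c > 0"
  shows "((\<lambda>t::real. exp (- c * t)) \<longlongrightarrow> 0) at_top"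
proof -
  have "filterlim (\<lambda>t. c * t) at_top at_top"
    by (rule filterlim_tendsto_pos_mult_at_top[OF tendsto_const assms filterlim_ident])
  then have "filterlim (\<lambda>t. - c * t) at_bot at_top"
    by (simp add: filterlim_uminus_at_bot)
  then show ?thesis
    by (rule filterlim_compose[OF exp_at_bot])
qed

lemma Liminf_ge_if_above_exp_decay:
  fixes f :: "real \<Rightarrow> real"
  assumes "\<forall>\<^sub>F t in at_top. f t \<ge> c + d * exp (- k * t)" "k > 0"
  shows "ereal c \<le> Liminf at_top (\<lambda>t. ereal (f t))"
proof -
  have "((\<lambda>t. ereal (c + d * exp (- k * t))) \<longlongrightarrow> ereal (c + d * 0)) at_top"
    unfolding lim_ereal by (intro tendsto_intros exp_neg_tendsto_zero \<open>k > 0\<close>)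
  then have "Liminf at_top (\<lambda>t. ereal (c + d * exp (- k * t))) = ereal c"
    by (simp add: lim_imp_Liminf)
  moreover have "Liminf at_top (\<lambda>t. ereal (c + d * exp (- k * t))) \<le> Liminf at_top (\<lambda>t. ereal (f t))"
    using assms(1) by (intro Liminf_mono) (simp add: eventually_mono)
  ultimately show ?thesis
    by simp
qed

lemma Limsup_le_if_below_exp_decay:
  fixes f :: "real \<Rightarrow> real"
  assumes "\<forall>\<^sub>F t in at_top. f t \<le> c + d * exp (- k * t)" "k > 0"
  shows "Limsup at_top (\<lambda>t. ereal (f t)) \<le> ereal c"
proof -
  have "((\<lambda>t. ereal (c + d * exp (- k * t))) \<longlongrightarrow> ereal (c + d * 0)) at_top"
    unfolding lim_ereal by (intro tendsto_intros exp_neg_tendsto_zero \<open>k > 0\<close>)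
  then have "Limsup at_top (\<lambda>t. ereal (c + d * exp (- k * t))) = ereal c"
    by (simp add: lim_imp_Limsup)
  moreover have "Limsup at_top (\<lambda>t. ereal (f t)) \<le> Limsup at_top (\<lambda>t. ereal (c + d * exp (- k * t)))"
    using assms(1) by (intro Limsup_mono) (simp add: eventually_mono)
  ultimately show ?thesis
    by simp
qed

section \<open>Lipschitz initial value problems\<close>

lemma has_real_derivative_inner_self:
  fixes d :: "real \<Rightarrow> 'a::real_inner"
  assumes "(d has_vector_derivative v) (at s within S)"
  shows "((\<lambda>s. inner (d s) (d s)) has_real_derivative 2 * inner (d s) v) (at s within S)"
proof -
  have "((\<lambda>s. inner (d s) (d s)) has_derivative (\<lambda>h. inner (d s) (h *\<^sub>R v) + inner (h *\<^sub>R v) (d s)))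
      (at s within S)"
    using assms unfolding has_vector_derivative_def by (intro derivative_eq_intros) auto
  moreover have "(\<lambda>h. inner (d s) (h *\<^sub>R v) + inner (h *\<^sub>R v) (d s)) = (*) (2 * inner (d s) v)"
    by (auto simp: inner_commute algebra_simps)
  ultimately show ?thesis
    unfolding has_field_derivative_def by simp
qed

text \<open>Gronwall's argument: |x - y|^2 e^{-2Lt} is nonincreasing.\<close>
lemma ode_solution_unique:
  fixes x y :: "real \<Rightarrow> 'a::real_inner"
  assumes dx: "\<And>s. 0 \<le> s \<Longrightarrow> s \<le> T \<Longrightarrow> (x has_vector_derivative F (x s)) (at s within {0..})"
    and dy: "\<And>s. 0 \<le> s \<Longrightarrow> s \<le> T \<Longrightarrow> (y has_vector_derivative F (y s)) (at s within {0..})"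
    and x_in: "\<And>s. 0 \<le> s \<Longrightarrow> s \<le> T \<Longrightarrow> x s \<in> U"
    and y_in: "\<And>s. 0 \<le> s \<Longrightarrow> s \<le> T \<Longrightarrow> y s \<in> U"
    and lip: "L-lipschitz_on U F" and "x 0 = y 0" and "0 \<le> t" "t \<le> T"
  shows "x t = y t"
proof -
  define u where "u s = inner (x s - y s) (x s - y s)" for s
  define u' where "u' s = 2 * inner (x s - y s) (F (x s) - F (y s))" for s
  have du: "(u has_real_derivative u' s) (at s within {0..})" if "0 \<le> s" "s \<le> T" for s
    unfolding u_def u'_def using dx[OF that] dy[OF that]
    by (intro has_real_derivative_inner_self has_vector_derivative_diff)
  have u'_le: "u' s \<le> 2 * L * u s" if "0 \<le> s" "s \<le> T" for s
  proof -
    have "inner (x s - y s) (F (x s) - F (y s)) \<le> norm (x s - y s) * norm (F (x s) - F (y s))"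
      by (rule norm_cauchy_schwarz)
    also have "\<dots> \<le> norm (x s - y s) * (L * norm (x s - y s))"
      using lipschitz_onD[OF lip x_in[OF that] y_in[OF that]]
      by (intro mult_left_mono) (simp_all add: dist_norm)
    also have "\<dots> = L * u s"
      by (simp add: u_def power2_norm_eq_inner[symmetric] power2_eq_square)
    finally show ?thesis
      by (simp add: u'_def)
  qed
  define w where "w s = - (u s * exp (- (2 * L) * s))" for s
  have "w 0 \<le> w t"
  proof (rule nondecreasing_if_deriv_nonneg[where g=w])
    show "(w has_real_derivative (2 * L * u s - u' s) * exp (- (2 * L) * s)) (at s within {0..})"
      if "0 \<le> s" "s \<le> t" for s
      unfolding w_def using that \<open>t \<le> T\<close>
      by (auto intro!: derivative_eq_intros du simp: algebra_simps)
    show "(2 * L * u s - u' s) * exp (- (2 * L) * s) \<ge> 0" if "0 < s" "s < t" for s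
      using u'_le[of s] that \<open>t \<le> T\<close> by simp
  qed (use \<open>0 \<le> t\<close> in simp_all)
  then have "u t \<le> 0"
    using \<open>x 0 = y 0\<close> by (simp add: w_def u_def mult_le_0_iff)
  then have "inner (x t - y t) (x t - y t) = 0"
    using inner_ge_zero[of "x t - y t"] by (simp add: u_def)
  then show ?thesis
    by simp
qed

lemma integral_monomial:
  fixes c :: real
  assumes "0 \<le> t"
  shows "integral {0..t} (\<lambda>s. c * s ^ k) = c * t ^ Suc k / Suc k"
proof -
  have "((\<lambda>s. c * s ^ k) has_integral c / Suc k * t ^ Suc k - c / Suc k * 0 ^ Suc k) {0..t}"
  proof (rule fundamental_theorem_of_calculus[OF assms])
    fix s :: real
    have "((\<lambda>s. c / Suc k * s ^ Suc k) has_real_derivative c / Suc k * (Suc k * s ^ k)) (at s)"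
      by (rule DERIV_cmult) (use DERIV_pow[of "Suc k" s] in simp)
    moreover have "c / Suc k * (Suc k * s ^ k) = c * s ^ k"
      by (simp del: of_nat_Suc)
    ultimately show "((\<lambda>s. c / Suc k * s ^ Suc k) has_vector_derivative c * s ^ k) (at s within {0..t})"
      by (metis has_field_derivative_at_within has_real_derivative_iff_has_vector_derivative)
  qed
  then show ?thesis
    by (auto dest: integral_unique)
qed

text \<open>The n-th Picard increment is bounded by A L^n t^(n+1)/(n+1)!, so the iterates converge
  uniformly on compact intervals.\<close>
locale picard_iteration =
  fixes F :: "'a::banach \<Rightarrow> 'a" and L :: real and x0 :: 'a
  assumes lip: "L-lipschitz_on UNIV F" and L_pos: "L > 0"
begin

primrec P :: "nat \<Rightarrow> real \<Rightarrow> 'a" where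
  "P 0 = (\<lambda>t. x0)"
| "P (Suc k) = (\<lambda>t. x0 + integral {0..t} (\<lambda>s. F (P k s)))"

lemma P_Suc: "P (Suc k) t = x0 + integral {0..t} (\<lambda>s. F (P k s))"
  by simp

declare P.simps(2)[simp del]

lemma P_at_0: "P k 0 = x0"
  by (cases k) (simp_all add: P_Suc)

lemma F_continuous_on: "continuous_on S F"
  using lipschitz_on_continuous_on[OF lip] continuous_on_subset by blast

lemma norm_F_diff_le: "norm (F u - F v) \<le> L * norm (u - v)"
  using lipschitz_onD[OF lip] by (simp add: dist_norm)

lemma P_continuous_on: "continuous_on {0..T} (P k)"
proof (induction k arbitrary: T)
  case 0
  then show ?case
    by simp
next
  case (Suc k)
  have "continuous_on {0..T} (\<lambda>s. F (P k s))"
    using continuous_on_compose[OF Suc.IH F_continuous_on] by (simp add: o_def)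
  then have "continuous_on {0..T} (\<lambda>t. integral {0..t} (\<lambda>s. F (P k s)))"
    by (intro indefinite_integral_continuous_1 integrable_continuous_interval)
  then show ?case
    unfolding P.simps(2) by (intro continuous_on_add continuous_on_const)
qed

lemma F_P_continuous_on: "continuous_on {0..T} (\<lambda>s. F (P k s))"
  using continuous_on_compose[OF P_continuous_on F_continuous_on] by (simp add: o_def)

lemma F_P_integrable: "(\<lambda>s. F (P k s)) integrable_on {0..T}"
  by (rule integrable_continuous_interval[OF F_P_continuous_on])

definition A where "A = norm (F x0)"

lemma norm_P_increment_le:
  assumes "0 \<le> t"
  shows "norm (P (Suc k) t - P k t) \<le> A * L ^ k * t ^ Suc k / fact (Suc k)"
  using assms
proof (induction k arbitrary: t)
  case 0
  then show ?case
    by (simp add: A_def P_Suc)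
next
  case (Suc k)
  define c where "c = A * L ^ Suc k / fact (Suc k)"
  have "P (Suc (Suc k)) t - P (Suc k) t = integral {0..t} (\<lambda>s. F (P (Suc k) s) - F (P k s))"
    unfolding P_Suc[of "Suc k" t] P_Suc[of k t] by (simp add: integral_diff[OF F_P_integrable F_P_integrable])
  also have "norm \<dots> \<le> integral {0..t} (\<lambda>s. c * s ^ Suc k)"
  proof (rule integral_norm_bound_integral)
    show "(\<lambda>s. F (P (Suc k) s) - F (P k s)) integrable_on {0..t}"
      by (intro integrable_diff F_P_integrable)
    show "(\<lambda>s. c * s ^ Suc k) integrable_on {0..t}"
      by (intro integrable_continuous_interval continuous_intros)
    fix s assume s: "s \<in> {0..t}"
    have "norm (F (P (Suc k) s) - F (P k s)) \<le> L * norm (P (Suc k) s - P k s)"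
      by (rule norm_F_diff_le)
    also have "\<dots> \<le> L * (A * L ^ k * s ^ Suc k / fact (Suc k))"
      using Suc.IH[of s] s L_pos by (intro mult_left_mono) auto
    also have "\<dots> = c * s ^ Suc k"
      by (simp add: c_def)
    finally show "norm (F (P (Suc k) s) - F (P k s)) \<le> c * s ^ Suc k" .
  qed
  also have "\<dots> = c * t ^ Suc (Suc k) / Suc (Suc k)"
    by (rule integral_monomial[OF Suc.prems])
  also have "\<dots> = A * L ^ Suc k * t ^ Suc (Suc k) / fact (Suc (Suc k))"
    by (simp add: c_def del: of_nat_Suc fact_Suc) (simp add: fact_Suc field_simps del: of_nat_Suc)
  finally show ?case .
qed

definition solution where "solution t = x0 + suminf (\<lambda>i. P (Suc i) t - P i t)"

lemma P_uniform_limit: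
  assumes "0 \<le> T"
  shows "uniform_limit {0..T} P solution sequentially"
proof -
  define M where "M i = A * T * (inverse (fact i) * (L * T) ^ i)" for i
  have "uniform_limit {0..T} (\<lambda>n t. \<Sum>i<n. P (Suc i) t - P i t)
      (\<lambda>t. suminf (\<lambda>i. P (Suc i) t - P i t)) sequentially"
  proof (rule Weierstrass_m_test)
    show "summable M"
      unfolding M_def by (intro summable_mult summable_exp)
    fix i t assume t: "t \<in> {0..T}"
    have "norm (P (Suc i) t - P i t) \<le> A * L ^ i * t ^ Suc i / fact (Suc i)"
      using norm_P_increment_le t by auto
    also have "\<dots> \<le> A * L ^ i * T ^ Suc i / fact (Suc i)"
      using t L_pos by (intro divide_right_mono mult_left_mono power_mono) (auto simp: A_def)
    also have "\<dots> \<le> A * L ^ i * T ^ Suc i / fact i"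
      using L_pos \<open>0 \<le> T\<close> by (intro divide_left_mono fact_mono) (auto simp: A_def)
    also have "\<dots> = M i"
      by (simp add: M_def power_mult_distrib field_simps)
    finally show "norm (P (Suc i) t - P i t) \<le> M i" .
  qed
  then have "uniform_limit {0..T} (\<lambda>n t. x0 + (\<Sum>i<n. P (Suc i) t - P i t)) solution sequentially"
    unfolding solution_def by (intro uniform_limit_intros)
  moreover have "x0 + (\<Sum>i<n. P (Suc i) t - P i t) = P n t" for n t
    using sum_lessThan_telescope[of "\<lambda>i. P i t" n] by (simp add: P_at_0)
  ultimately show ?thesis
    by simp
qed

lemma F_P_uniform_limit:
  assumes "0 \<le> T"
  shows "uniform_limit {0..T} (\<lambda>n s. F (P n s)) (\<lambda>s. F (solution s)) sequentially"
proof (rule uniform_limitI)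
  fix e :: real assume "e > 0"
  have "\<forall>\<^sub>F n in sequentially. \<forall>s\<in>{0..T}. dist (P n s) (solution s) < e / L"
    using uniform_limitD[OF P_uniform_limit[OF assms]] \<open>e > 0\<close> L_pos by simp
  then show "\<forall>\<^sub>F n in sequentially. \<forall>s\<in>{0..T}. dist (F (P n s)) (F (solution s)) < e"
  proof (rule eventually_mono, intro ballI)
    fix n s assume close: "\<forall>s\<in>{0..T}. dist (P n s) (solution s) < e / L" and "s \<in> {0..T}"
    have "dist (F (P n s)) (F (solution s)) \<le> L * dist (P n s) (solution s)"
      using lipschitz_onD[OF lip] by simp
    also have "\<dots> < L * (e / L)"
      using close \<open>s \<in> {0..T}\<close> L_pos by (intro mult_strict_left_mono) auto
    finally show "dist (F (P n s)) (F (solution s)) < e"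
      using L_pos by simp
  qed
qed

lemma solution_integral_equation:
  assumes "0 \<le> T"
  shows "solution T = x0 + integral {0..T} (\<lambda>s. F (solution s))"
proof -
  obtain I J where I: "\<And>n. ((\<lambda>s. F (P n s)) has_integral I n) {0..T}"
    and J: "((\<lambda>s. F (solution s)) has_integral J) {0..T}" and "I \<longlonglongrightarrow> J"
    using uniform_limit_integral[OF F_P_uniform_limit[OF assms] F_P_continuous_on] by auto
  have "P (Suc n) T = x0 + I n" for n
    using I[of n] by (simp add: P_Suc integral_unique)
  moreover have "(\<lambda>n. x0 + I n) \<longlonglongrightarrow> x0 + J"
    by (intro tendsto_intros \<open>I \<longlonglongrightarrow> J\<close>)
  moreover have "(\<lambda>n. P (Suc n) T) \<longlonglongrightarrow> solution T"
    by (intro LIMSEQ_Suc tendsto_uniform_limitI[OF P_uniform_limit[OF assms]]) (use assms in simp)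
  ultimately have "solution T = x0 + J"
    using LIMSEQ_unique by auto
  then show ?thesis
    using J by (simp add: integral_unique)
qed

lemma solution_at_0: "solution 0 = x0"
  by (simp add: solution_def P_at_0)

lemma solution_has_vector_derivative:
  assumes "0 \<le> t"
  shows "(solution has_vector_derivative F (solution t)) (at t within {0..})"
proof -
  have "continuous_on {0..t+1} (\<lambda>s. F (solution s))"
    using continuous_on_compose[OF uniform_limit_theorem[OF _ P_uniform_limit] F_continuous_on] assms
    by (auto simp: o_def P_continuous_on)
  then have "((\<lambda>u. x0 + integral {0..u} (\<lambda>s. F (solution s))) has_vector_derivative F (solution t))
      (at t within {0..t+1})"
    using assms by (auto intro!: derivative_eq_intros integral_has_vector_derivative)
  then have "(solution has_vector_derivative F (solution t)) (at t within {0..t+1})"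
    by (rule has_vector_derivative_transform[rotated 2]) (use assms solution_integral_equation in auto)
  moreover have "at t within {0..t+1} = at t within {0..}"
    by (rule at_within_nhd[where S = "{..<t+1}"]) auto
  ultimately show ?thesis
    by simp
qed

end

lemma ode_global_solution_exists:
  fixes F :: "'a::banach \<Rightarrow> 'a"
  assumes "L-lipschitz_on UNIV F"
  shows "\<exists>x. x 0 = x0 \<and> (\<forall>t\<ge>0. (x has_vector_derivative F (x t)) (at t within {0..}))"
proof -
  have "(max L 1)-lipschitz_on UNIV F"
    using assms by (rule lipschitz_on_mono) auto
  then interpret picard_iteration F "max L 1" x0
    by unfold_locales auto
  show ?thesis
    using solution_at_0 solution_has_vector_derivative by blast
qed

section \<open>Bounded Lipschitz functions\<close>

definition bounded_lipschitz_on :: "'a::metric_space set \<Rightarrow> ('a \<Rightarrow> real) \<Rightarrow> bool" where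
  "bounded_lipschitz_on U f \<longleftrightarrow> (\<exists>L. L-lipschitz_on U f) \<and> (\<exists>A. \<forall>x\<in>U. \<bar>f x\<bar> \<le> A)"

lemma bounded_lipschitz_onI:
  "L-lipschitz_on U f \<Longrightarrow> (\<And>x. x \<in> U \<Longrightarrow> \<bar>f x\<bar> \<le> A) \<Longrightarrow> bounded_lipschitz_on U f"
  unfolding bounded_lipschitz_on_def by blast

lemma bounded_lipschitz_on_const: "bounded_lipschitz_on U (\<lambda>x. c)"
  by (rule bounded_lipschitz_onI[OF lipschitz_on_constant, where A="\<bar>c\<bar>"]) simp

lemma bounded_lipschitz_on_add:
  assumes "bounded_lipschitz_on U f" "bounded_lipschitz_on U g"
  shows "bounded_lipschitz_on U (\<lambda>x. f x + g x)"
proof -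
  obtain L1 A1 where "L1-lipschitz_on U f" "\<And>x. x \<in> U \<Longrightarrow> \<bar>f x\<bar> \<le> A1"
    using assms(1) unfolding bounded_lipschitz_on_def by blast
  moreover obtain L2 A2 where "L2-lipschitz_on U g" "\<And>x. x \<in> U \<Longrightarrow> \<bar>g x\<bar> \<le> A2"
    using assms(2) unfolding bounded_lipschitz_on_def by blast
  ultimately show ?thesis
    by (intro bounded_lipschitz_onI[of "L1 + L2" _ _ "A1 + A2"] lipschitz_on_add)
      (auto intro: abs_triangle_ineq[THEN order_trans] add_mono)
qed

lemma bounded_lipschitz_on_uminus:
  "bounded_lipschitz_on U f \<Longrightarrow> bounded_lipschitz_on U (\<lambda>x. - f x)"
  unfolding bounded_lipschitz_on_def by (auto intro: lipschitz_on_minus)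

lemma bounded_lipschitz_on_diff:
  "bounded_lipschitz_on U f \<Longrightarrow> bounded_lipschitz_on U g \<Longrightarrow> bounded_lipschitz_on U (\<lambda>x. f x - g x)"
  using bounded_lipschitz_on_add[of U f "\<lambda>x. - g x"] bounded_lipschitz_on_uminus[of U g] by simp

lemma bounded_lipschitz_on_mult:
  assumes "bounded_lipschitz_on U f" "bounded_lipschitz_on U g"
  shows "bounded_lipschitz_on U (\<lambda>x. f x * g x)"
proof -
  obtain L1 A1 where l1: "L1-lipschitz_on U f" and a1: "\<And>x. x \<in> U \<Longrightarrow> \<bar>f x\<bar> \<le> A1"
    using assms(1) unfolding bounded_lipschitz_on_def by blast
  obtain L2 A2 where l2: "L2-lipschitz_on U g" and a2: "\<And>x. x \<in> U \<Longrightarrow> \<bar>g x\<bar> \<le> A2"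
    using assms(2) unfolding bounded_lipschitz_on_def by blast
  have "(\<bar>A1\<bar> * L2 + \<bar>A2\<bar> * L1)-lipschitz_on U (\<lambda>x. f x * g x)"
  proof (rule lipschitz_onI)
    fix x y assume x: "x \<in> U" and y: "y \<in> U"
    have "dist (f x * g x) (f y * g y) = \<bar>f x * (g x - g y) + g y * (f x - f y)\<bar>"
      by (simp add: dist_real_def algebra_simps)
    also have "\<dots> \<le> \<bar>f x\<bar> * \<bar>g x - g y\<bar> + \<bar>g y\<bar> * \<bar>f x - f y\<bar>"
      by (metis abs_mult abs_triangle_ineq)
    also have "\<dots> \<le> \<bar>A1\<bar> * (L2 * dist x y) + \<bar>A2\<bar> * (L1 * dist x y)"
      using lipschitz_onD[OF l1 x y] lipschitz_onD[OF l2 x y] a1[OF x] a2[OF y]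
      by (intro add_mono mult_mono) (auto simp: dist_real_def)
    finally show "dist (f x * g x) (f y * g y) \<le> (\<bar>A1\<bar> * L2 + \<bar>A2\<bar> * L1) * dist x y"
      by (simp add: algebra_simps)
  qed (use lipschitz_on_nonneg[OF l1] lipschitz_on_nonneg[OF l2] in simp)
  moreover have "\<bar>f x * g x\<bar> \<le> A1 * A2" if "x \<in> U" for x
    using a1[OF that] a2[OF that] by (simp add: abs_mult mult_mono')
  ultimately show ?thesis
    by (rule bounded_lipschitz_onI)
qed

lemma bounded_lipschitz_on_inverse:
  assumes "bounded_lipschitz_on U f" "c > 0" and away: "\<And>x. x \<in> U \<Longrightarrow> \<bar>f x\<bar> \<ge> c"
  shows "bounded_lipschitz_on U (\<lambda>x. 1 / f x)"
proof -
  obtain L where l: "L-lipschitz_on U f"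
    using assms(1) unfolding bounded_lipschitz_on_def by blast
  have "(L / (c * c))-lipschitz_on U (\<lambda>x. 1 / f x)"
  proof (rule lipschitz_onI)
    fix x y assume x: "x \<in> U" and y: "y \<in> U"
    have "f x \<noteq> 0" "f y \<noteq> 0"
      using away[OF x] away[OF y] \<open>c > 0\<close> by auto
    then have "dist (1 / f x) (1 / f y) = \<bar>f y - f x\<bar> / (\<bar>f x\<bar> * \<bar>f y\<bar>)"
      by (simp add: dist_real_def abs_mult field_simps)
    also have "\<dots> \<le> \<bar>f y - f x\<bar> / (c * c)"
      using away[OF x] away[OF y] \<open>c > 0\<close> by (intro divide_left_mono mult_mono) auto
    also have "\<dots> \<le> L * dist x y / (c * c)"
      using lipschitz_onD[OF l x y] \<open>c > 0\<close>
      by (intro divide_right_mono) (simp_all add: dist_real_def abs_minus_commute)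
    finally show "dist (1 / f x) (1 / f y) \<le> L / (c * c) * dist x y"
      by simp
  qed (use lipschitz_on_nonneg[OF l] in simp)
  moreover have "\<bar>1 / f x\<bar> \<le> 1 / c" if "x \<in> U" for x
    using away[OF that] \<open>c > 0\<close> by (simp add: frac_le)
  ultimately show ?thesis
    by (rule bounded_lipschitz_onI)
qed

lemma bounded_lipschitz_on_divide:
  assumes "bounded_lipschitz_on U f" "bounded_lipschitz_on U g"
    and "c > 0" "\<And>x. x \<in> U \<Longrightarrow> \<bar>g x\<bar> \<ge> c"
  shows "bounded_lipschitz_on U (\<lambda>x. f x / g x)"
  using bounded_lipschitz_on_mult[OF assms(1) bounded_lipschitz_on_inverse[OF assms(2-4)]] by simp

lemma bounded_lipschitz_on_max_const:
  assumes "bounded_lipschitz_on U f"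
  shows "bounded_lipschitz_on U (\<lambda>x. max c (f x))"
proof -
  obtain L A where l: "L-lipschitz_on U f" and a: "\<And>x. x \<in> U \<Longrightarrow> \<bar>f x\<bar> \<le> A"
    using assms unfolding bounded_lipschitz_on_def by blast
  have "L-lipschitz_on U (\<lambda>x. max c (f x))"
  proof (rule lipschitz_onI)
    fix x y assume "x \<in> U" "y \<in> U"
    have "dist (max c (f x)) (max c (f y)) \<le> dist (f x) (f y)"
      by (auto simp: dist_real_def max_def)
    also have "\<dots> \<le> L * dist x y"
      using lipschitz_onD[OF l \<open>x \<in> U\<close> \<open>y \<in> U\<close>] .
    finally show "dist (max c (f x)) (max c (f y)) \<le> L * dist x y" .
  qed (rule lipschitz_on_nonneg[OF l])
  moreover have "\<bar>max c (f x)\<bar> \<le> \<bar>c\<bar> + A" if "x \<in> U" for x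
    using a[OF that] by auto
  ultimately show ?thesis
    by (rule bounded_lipschitz_onI)
qed

lemma lipschitz_on_Pair4:
  assumes "bounded_lipschitz_on U f1" "bounded_lipschitz_on U f2"
    "bounded_lipschitz_on U f3" "bounded_lipschitz_on U f4"
  shows "\<exists>L. L-lipschitz_on U (\<lambda>x. (f1 x, f2 x, f3 x, f4 x))"
proof -
  obtain L1 where l1: "L1-lipschitz_on U f1"
    using assms(1) unfolding bounded_lipschitz_on_def by blast
  obtain L2 where l2: "L2-lipschitz_on U f2"
    using assms(2) unfolding bounded_lipschitz_on_def by blast
  obtain L3 where l3: "L3-lipschitz_on U f3"
    using assms(3) unfolding bounded_lipschitz_on_def by blast
  obtain L4 where l4: "L4-lipschitz_on U f4"
    using assms(4) unfolding bounded_lipschitz_on_def by blast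
  show ?thesis
    using lipschitz_on_Pair[OF l1 lipschitz_on_Pair[OF l2 lipschitz_on_Pair[OF l3 l4]]] by blast
qed

lemma lipschitz_on_fst: "1-lipschitz_on U fst"
  by (rule lipschitz_onI) (auto simp: dist_fst_le)

lemma lipschitz_on_snd: "1-lipschitz_on U snd"
  by (rule lipschitz_onI) (auto simp: dist_snd_le)

section \<open>The bee-mite system\<close>

definition coordB :: "real \<times> real \<times> real \<times> real \<Rightarrow> real" where "coordB x = fst x"
definition coordI :: "real \<times> real \<times> real \<times> real \<Rightarrow> real" where "coordI x = fst (snd x)"
definition coordM :: "real \<times> real \<times> real \<times> real \<Rightarrow> real" where "coordM x = fst (snd (snd x))"
definition coordN :: "real \<times> real \<times> real \<times> real \<Rightarrow> real" where "coordN x = snd (snd (snd x))"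

lemma coord_simps [simp]:
  "coordB (B, I, M, N) = B" "coordI (B, I, M, N) = I" "coordM (B, I, M, N) = M" "coordN (B, I, M, N) = N"
  by (simp_all add: coordB_def coordI_def coordM_def coordN_def)

lemma lipschitz_on_coords:
  "1-lipschitz_on U coordB" "1-lipschitz_on U coordI" "1-lipschitz_on U coordM" "1-lipschitz_on U coordN"
  unfolding coordB_def[abs_def] coordI_def[abs_def] coordM_def[abs_def] coordN_def[abs_def]
  using lipschitz_on_fst
    lipschitz_on_compose2[OF lipschitz_on_snd lipschitz_on_fst]
    lipschitz_on_compose2[OF lipschitz_on_compose2[OF lipschitz_on_snd lipschitz_on_snd] lipschitz_on_fst]
    lipschitz_on_compose2[OF lipschitz_on_compose2[OF lipschitz_on_snd lipschitz_on_snd] lipschitz_on_snd]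
  by simp_all

lemma has_vector_derivative_fst:
  "(X has_vector_derivative v) F \<Longrightarrow> ((\<lambda>t. fst (X t)) has_vector_derivative fst v) F"
  unfolding has_vector_derivative_def by (drule has_derivative_fst) simp

lemma has_vector_derivative_snd:
  "(X has_vector_derivative v) F \<Longrightarrow> ((\<lambda>t. snd (X t)) has_vector_derivative snd v) F"
  unfolding has_vector_derivative_def by (drule has_derivative_snd) simp

lemma has_real_derivative_coords:
  assumes "(X has_vector_derivative v) F"
  shows "((\<lambda>t. coordB (X t)) has_real_derivative coordB v) F"
    "((\<lambda>t. coordI (X t)) has_real_derivative coordI v) F"
    "((\<lambda>t. coordM (X t)) has_real_derivative coordM v) F"
    "((\<lambda>t. coordN (X t)) has_real_derivative coordN v) F"
  unfolding coordB_def coordI_def coordM_def coordN_def has_real_derivative_iff_has_vector_derivative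
  by (intro has_vector_derivative_fst has_vector_derivative_snd assms)+

definition bee_region :: "real \<Rightarrow> real \<Rightarrow> (real \<times> real \<times> real \<times> real) set" where
  "bee_region \<rho> \<kappa> = {x. \<bar>coordB x\<bar> \<le> \<rho> \<and> \<bar>coordI x\<bar> \<le> \<rho> \<and> \<bar>coordM x\<bar> \<le> \<rho> \<and> \<bar>coordN x\<bar> \<le> \<rho>
    \<and> \<kappa> \<le> \<bar>coordB x + coordI x\<bar>}"

lemma bee_region_mono: "\<rho> \<le> \<rho>' \<Longrightarrow> \<kappa>' \<le> \<kappa> \<Longrightarrow> bee_region \<rho> \<kappa> \<subseteq> bee_region \<rho>' \<kappa>'"
  unfolding bee_region_def by auto

locale bee_params =
  fixes b lam gam m mu r n p h beta delta e :: real
  assumes pos: "b > 0" "lam > 0" "gam > 0" "m > 0" "mu > 0" "r > 0" "n > 0" "p > 0" "h > 0"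
    "beta > 0" "delta > 0" "e > 0"
begin

text \<open>The right-hand sides of (S), with the total bee population B + I passed as a separate
  argument S so that it can be replaced by a truncation.\<close>
definition "fB B I M N S = b * B / S - lam * B * N - gam * B * I - m * B"
definition "fI B I M N S = b * I / S + lam * B * N + gam * B * I - (m + mu) * I"
definition "fM B I M N S = r * (M + N) - n * M - p / (h * S) * M * (M + N) - M * (beta * I + delta * N + e * B)"
definition "fN B I M N S = - n * N - p / (h * S) * N * (M + N) + beta * M * I + delta * M * N - e * N * B"

lemma fB_plus_fI: "fB B I M N S + fI B I M N S = b * (B + I) / S - m * (B + I) - mu * I"
  by (simp add: fB_def fI_def add_divide_distrib algebra_simps)

lemma fM_plus_fN: "fM B I M N S + fN B I M N S = (M + N) * ((r - n) - p / (h * S) * (M + N) - e * B)"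
proof -
  have "r * (M + N) - n * M - q * M * (M + N) - M * (beta * I + delta * N + e * B)
      + (- n * N - q * N * (M + N) + beta * M * I + delta * M * N - e * N * B)
      = (M + N) * ((r - n) - q * (M + N) - e * B)" for q
    by (simp add: algebra_simps)
  then show ?thesis
    unfolding fM_def fN_def .
qed

lemma bounded_lipschitz_on_rates:
  assumes "bounded_lipschitz_on U B" "bounded_lipschitz_on U I" "bounded_lipschitz_on U M"
    "bounded_lipschitz_on U N" "bounded_lipschitz_on U S"
    and "c > 0" "\<And>x. x \<in> U \<Longrightarrow> \<bar>S x\<bar> \<ge> c"
  shows "bounded_lipschitz_on U (\<lambda>x. fB (B x) (I x) (M x) (N x) (S x))"
    "bounded_lipschitz_on U (\<lambda>x. fI (B x) (I x) (M x) (N x) (S x))"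
    "bounded_lipschitz_on U (\<lambda>x. fM (B x) (I x) (M x) (N x) (S x))"
    "bounded_lipschitz_on U (\<lambda>x. fN (B x) (I x) (M x) (N x) (S x))"
proof -
  have quotients: "bounded_lipschitz_on U (\<lambda>x. b * B x / S x)" "bounded_lipschitz_on U (\<lambda>x. b * I x / S x)"
    using assms by (intro bounded_lipschitz_on_divide bounded_lipschitz_on_mult bounded_lipschitz_on_const;
        auto)+
  have "\<bar>h * S x\<bar> \<ge> h * c" if "x \<in> U" for x
    using assms(7)[OF that] pos(9) by (simp add: abs_mult)
  then have "bounded_lipschitz_on U (\<lambda>x. p / (h * S x))"
    using assms(5,6) pos(9)
    by (intro bounded_lipschitz_on_divide[where c="h * c"] bounded_lipschitz_on_mult
        bounded_lipschitz_on_const) auto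
  note intros = bounded_lipschitz_on_add bounded_lipschitz_on_diff bounded_lipschitz_on_mult
    bounded_lipschitz_on_const bounded_lipschitz_on_uminus assms(1-4) quotients this
  show "bounded_lipschitz_on U (\<lambda>x. fB (B x) (I x) (M x) (N x) (S x))"
    "bounded_lipschitz_on U (\<lambda>x. fI (B x) (I x) (M x) (N x) (S x))"
    "bounded_lipschitz_on U (\<lambda>x. fM (B x) (I x) (M x) (N x) (S x))"
    "bounded_lipschitz_on U (\<lambda>x. fN (B x) (I x) (M x) (N x) (S x))"
    unfolding fB_def fI_def fM_def fN_def by (intro intros)+
qed

definition bee_field :: "real \<times> real \<times> real \<times> real \<Rightarrow> real \<times> real \<times> real \<times> real" where
  "bee_field x =
    (let B = coordB x; I = coordI x; M = coordM x; N = coordN x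
     in (fB B I M N (B + I), fI B I M N (B + I), fM B I M N (B + I), fN B I M N (B + I)))"

lemma bee_field_lipschitz_on_region:
  assumes "\<kappa> > 0"
  shows "\<exists>L. L-lipschitz_on (bee_region \<rho> \<kappa>) bee_field"
proof -
  have coords: "bounded_lipschitz_on (bee_region \<rho> \<kappa>) coordB" "bounded_lipschitz_on (bee_region \<rho> \<kappa>) coordI"
    "bounded_lipschitz_on (bee_region \<rho> \<kappa>) coordM" "bounded_lipschitz_on (bee_region \<rho> \<kappa>) coordN"
    by (rule bounded_lipschitz_onI[OF lipschitz_on_coords(1), where A=\<rho>]
        bounded_lipschitz_onI[OF lipschitz_on_coords(2), where A=\<rho>]
        bounded_lipschitz_onI[OF lipschitz_on_coords(3), where A=\<rho>]
        bounded_lipschitz_onI[OF lipschitz_on_coords(4), where A=\<rho>];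
        simp add: bee_region_def)+
  then have "bounded_lipschitz_on (bee_region \<rho> \<kappa>) (\<lambda>x. coordB x + coordI x)"
    by (intro bounded_lipschitz_on_add)
  then show ?thesis
    unfolding bee_field_def[abs_def] Let_def
    by (intro lipschitz_on_Pair4; rule bounded_lipschitz_on_rates[OF coords _ assms])
      (auto simp: bee_region_def)
qed

lemma bee_solutionD:
  assumes "bee_solution b lam gam m mu r n p h beta delta e B I M N" "0 \<le> t"
  shows "(B has_real_derivative fB (B t) (I t) (M t) (N t) (B t + I t)) (at t within {0..})"
    "(I has_real_derivative fI (B t) (I t) (M t) (N t) (B t + I t)) (at t within {0..})"
    "(M has_real_derivative fM (B t) (I t) (M t) (N t) (B t + I t)) (at t within {0..})"
    "(N has_real_derivative fN (B t) (I t) (M t) (N t) (B t + I t)) (at t within {0..})"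
    "B t + I t \<noteq> 0"
  using assms unfolding bee_solution_def fB_def fI_def fM_def fN_def by blast+

lemma bee_solution_has_vector_derivative:
  assumes "bee_solution b lam gam m mu r n p h beta delta e B I M N" "0 \<le> t"
  shows "((\<lambda>s. (B s, I s, M s, N s)) has_vector_derivative bee_field (B t, I t, M t, N t)) (at t within {0..})"
  using bee_solutionD[OF assms] unfolding bee_field_def Let_def coord_simps
  by (intro has_vector_derivative_Pair) (simp_all add: has_real_derivative_iff_has_vector_derivative)

lemma bee_solution_in_region:
  assumes sol: "bee_solution b lam gam m mu r n p h beta delta e B I M N" and "0 \<le> T"
  obtains \<rho> \<kappa> where "\<kappa> > 0" "\<And>s. 0 \<le> s \<Longrightarrow> s \<le> T \<Longrightarrow> (B s, I s, M s, N s) \<in> bee_region \<rho> \<kappa>"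
proof -
  have cont: "continuous_on {0..T} B" "continuous_on {0..T} I" "continuous_on {0..T} M"
    "continuous_on {0..T} N"
    using bee_solutionD(1-4)[OF sol]
    by (auto intro!: continuous_on_if_has_real_derivative_within[where T="{0..}"])
  define X where "X s = (B s, I s, M s, N s)" for s
  have "continuous_on {0..T} X"
    unfolding X_def using cont by (intro continuous_on_Pair)
  then have "bounded (X ` {0..T})"
    by (intro compact_imp_bounded compact_continuous_image compact_Icc)
  then obtain \<rho> where \<rho>: "\<And>s. s \<in> {0..T} \<Longrightarrow> norm (X s) \<le> \<rho>"
    unfolding bounded_iff by blast
  have coords_le_norm: "\<bar>B s\<bar> \<le> norm (X s)" "\<bar>I s\<bar> \<le> norm (X s)" "\<bar>M s\<bar> \<le> norm (X s)" "\<bar>N s\<bar> \<le> norm (X s)"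
    for s
    unfolding X_def by (metis norm_fst_le norm_snd_le order_trans real_norm_def)+
  obtain s0 where s0: "s0 \<in> {0..T}" "\<And>s. s \<in> {0..T} \<Longrightarrow> \<bar>B s0 + I s0\<bar> \<le> \<bar>B s + I s\<bar>"
  proof -
    have "continuous_on {0..T} (\<lambda>s. \<bar>B s + I s\<bar>)"
      using cont(1,2) by (intro continuous_intros)
    note continuous_attains_inf[OF compact_Icc _ this]
    then have "\<exists>s0\<in>{0..T}. \<forall>s\<in>{0..T}. \<bar>B s0 + I s0\<bar> \<le> \<bar>B s + I s\<bar>"
      using \<open>0 \<le> T\<close> by simp
    then show thesis
      using that by blast
  qed
  show ?thesis
  proof
    show "\<bar>B s0 + I s0\<bar> > 0"
      using bee_solutionD(5)[OF sol, of s0] s0(1) by simp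
    show "(B s, I s, M s, N s) \<in> bee_region \<rho> \<bar>B s0 + I s0\<bar>" if "0 \<le> s" "s \<le> T" for s
      using \<rho>[of s] s0(2)[of s] coords_le_norm[of s] that unfolding bee_region_def by auto
  qed
qed

lemma bee_solution_unique:
  assumes sol: "bee_solution b lam gam m mu r n p h beta delta e B I M N"
    and sol': "bee_solution b lam gam m mu r n p h beta delta e B' I' M' N'"
    and "B' 0 = B 0" "I' 0 = I 0" "M' 0 = M 0" "N' 0 = N 0" and "0 \<le> t"
  shows "B' t = B t \<and> I' t = I t \<and> M' t = M t \<and> N' t = N t"
proof -
  obtain \<rho>1 \<kappa>1 where "\<kappa>1 > 0" and in1: "\<And>s. 0 \<le> s \<Longrightarrow> s \<le> t \<Longrightarrow> (B s, I s, M s, N s) \<in> bee_region \<rho>1 \<kappa>1"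
    using bee_solution_in_region[OF sol \<open>0 \<le> t\<close>] by blast
  obtain \<rho>2 \<kappa>2 where "\<kappa>2 > 0"
    and in2: "\<And>s. 0 \<le> s \<Longrightarrow> s \<le> t \<Longrightarrow> (B' s, I' s, M' s, N' s) \<in> bee_region \<rho>2 \<kappa>2"
    using bee_solution_in_region[OF sol' \<open>0 \<le> t\<close>] by blast
  define U where "U = bee_region (max \<rho>1 \<rho>2) (min \<kappa>1 \<kappa>2)"
  have "bee_region \<rho>1 \<kappa>1 \<subseteq> U" "bee_region \<rho>2 \<kappa>2 \<subseteq> U"
    unfolding U_def by (simp_all add: bee_region_mono)
  then have in_U: "(B s, I s, M s, N s) \<in> U" "(B' s, I' s, M' s, N' s) \<in> U" if "0 \<le> s" "s \<le> t" for s
    using in1[OF that] in2[OF that] by blast+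
  obtain L where lip: "L-lipschitz_on U bee_field"
    unfolding U_def using bee_field_lipschitz_on_region[of "min \<kappa>1 \<kappa>2"] \<open>\<kappa>1 > 0\<close> \<open>\<kappa>2 > 0\<close> by auto
  have "(B t, I t, M t, N t) = (B' t, I' t, M' t, N' t)"
  proof (rule ode_solution_unique[where x="\<lambda>s. (B s, I s, M s, N s)" and y="\<lambda>s. (B' s, I' s, M' s, N' s)"
        and T=t, OF _ _ in_U])
    show "((\<lambda>s. (B s, I s, M s, N s)) has_vector_derivative bee_field (B s, I s, M s, N s))
        (at s within {0..})" if "0 \<le> s" for s
      using bee_solution_has_vector_derivative[OF sol that] .
    show "((\<lambda>s. (B' s, I' s, M' s, N' s)) has_vector_derivative bee_field (B' s, I' s, M' s, N' s))
        (at s within {0..})" if "0 \<le> s" for s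
      using bee_solution_has_vector_derivative[OF sol' that] .
  qed (use lip assms(3-7) in simp_all)
  then show ?thesis
    by simp
qed

lemma total_bees_has_derivative:
  assumes "bee_solution b lam gam m mu r n p h beta delta e B I M N" "0 \<le> t"
  shows "((\<lambda>s. B s + I s) has_real_derivative b - m * B t - (m + mu) * I t) (at t within {0..})"
proof -
  have "fB (B t) (I t) (M t) (N t) (B t + I t) + fI (B t) (I t) (M t) (N t) (B t + I t)
      = b - m * B t - (m + mu) * I t"
    using bee_solutionD(5)[OF assms] by (simp add: fB_plus_fI) (simp add: algebra_simps)
  then show ?thesis
    using DERIV_add[OF bee_solutionD(1,2)[OF assms]] by simp
qed

lemma total_bees_asymptotics:
  assumes sol: "bee_solution b lam gam m mu r n p h beta delta e B I M N"
    and nonneg: "\<And>t. t \<ge> 0 \<Longrightarrow> B t \<ge> 0 \<and> I t \<ge> 0"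
  shows "ereal (b / (m + mu)) \<le> Liminf at_top (\<lambda>t. ereal (B t + I t))"
    "Limsup at_top (\<lambda>t. ereal (B t + I t)) \<le> ereal (b / m)"
proof -
  have "m + mu > 0" "m > 0"
    using pos by auto
  have "B t + I t \<ge> b / (m + mu) + (B 0 + I 0 - b / (m + mu)) * exp (- (m + mu) * t)" if "t \<ge> 0" for t
  proof (rule linear_differential_inequality[OF total_bees_has_derivative[OF sol] _ \<open>m + mu > 0\<close> that])
    show "b - (m + mu) * (B s + I s) \<le> b - m * B s - (m + mu) * I s" if "0 \<le> s" for s
      using nonneg[OF that] pos by (simp add: algebra_simps)
  qed
  then show "ereal (b / (m + mu)) \<le> Liminf at_top (\<lambda>t. ereal (B t + I t))"
    by (intro Liminf_ge_if_above_exp_decay[OF _ \<open>m + mu > 0\<close>] eventually_mono[OF eventually_ge_at_top[of 0]])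
  have "- (B t + I t) \<ge> - b / m + (- (B 0 + I 0) + b / m) * exp (- m * t)" if "t \<ge> 0" for t
    using linear_differential_inequality[OF DERIV_minus[OF total_bees_has_derivative[OF sol]] _ \<open>m > 0\<close> that,
        of "- b"] nonneg pos by (simp add: algebra_simps)
  then show "Limsup at_top (\<lambda>t. ereal (B t + I t)) \<le> ereal (b / m)"
    by (intro Limsup_le_if_below_exp_decay[OF _ \<open>m > 0\<close>, where d="B 0 + I 0 - b / m"]
        eventually_mono[OF eventually_ge_at_top[of 0]]) (simp add: algebra_simps)
qed
end

section \<open>The truncated system\<close>

locale bee_system = bee_params +
  fixes B0 I0 M0 N0 :: real
  assumes init: "(B0, I0, M0, N0) \<in> D0"
begin

definition "S_lower = min (B0 + I0) (b / (m + mu))"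
definition "S_upper = max (B0 + I0) (b / m)"
definition "mites_upper = max (M0 + N0) (h * S_upper * r / p)"
definition "clip_bound = max S_upper mites_upper"
definition "clip v = max 0 (min v clip_bound)"

lemma init_nonneg: "B0 \<ge> 0" "I0 \<ge> 0" "M0 \<ge> 0" "N0 \<ge> 0" "B0 + I0 > 0"
  using init by (auto simp: D0_def)

lemma S_lower_pos: "S_lower > 0"
  using init_nonneg pos by (simp add: S_lower_def)

lemma S_lower_le: "S_lower \<le> b / (m + mu)" "S_lower \<le> B0 + I0"
  by (simp_all add: S_lower_def)

lemma S_upper_ge: "b / m \<le> S_upper" "B0 + I0 \<le> S_upper"
  by (simp_all add: S_upper_def)

lemma S_upper_pos: "S_upper > 0"
  using pos by (simp add: S_upper_def less_max_iff_disj)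

lemma S_lower_le_S_upper: "S_lower \<le> S_upper"
  using S_lower_le(2) S_upper_ge(2) by linarith

lemma mites_upper_ge: "M0 + N0 \<le> mites_upper" "h * S_upper * r / p \<le> mites_upper"
  by (simp_all add: mites_upper_def)

lemma mites_upper_pos: "mites_upper > 0"
  using pos S_upper_pos by (simp add: mites_upper_def less_max_iff_disj)

lemma clip_bound_ge: "S_upper \<le> clip_bound" "mites_upper \<le> clip_bound"
  by (simp_all add: clip_bound_def)

lemma clip_nonneg: "clip v \<ge> 0"
  by (simp add: clip_def)

lemma clip_of_nonpos: "v \<le> 0 \<Longrightarrow> clip v = 0"
  using clip_bound_ge S_upper_pos by (simp add: clip_def)

lemma clip_id: "0 \<le> v \<Longrightarrow> v \<le> clip_bound \<Longrightarrow> clip v = v"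
  by (simp add: clip_def)

lemma clip_ge_min: "0 \<le> v \<Longrightarrow> min v clip_bound \<le> clip v"
  by (simp add: clip_def)

lemma clip_le_self: "0 \<le> v \<Longrightarrow> clip v \<le> v"
  by (simp add: clip_def)

lemma bounded_lipschitz_on_clip:
  "1-lipschitz_on U f \<Longrightarrow> bounded_lipschitz_on U (\<lambda>x. clip (f x))"
proof -
  assume "1-lipschitz_on U f"
  moreover have "1-lipschitz_on (f ` U) clip"
    by (rule lipschitz_onI) (auto simp: clip_def dist_real_def)
  ultimately have "1-lipschitz_on U (\<lambda>x. clip (f x))"
    using lipschitz_on_compose2 by fastforce
  moreover have "\<bar>clip (f x)\<bar> \<le> clip_bound" for x
    using clip_bound_ge S_upper_pos by (simp add: clip_def)
  ultimately show ?thesis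
    by (rule bounded_lipschitz_onI)
qed

definition trunc_field :: "real \<times> real \<times> real \<times> real \<Rightarrow> real \<times> real \<times> real \<times> real" where
  "trunc_field x =
    (let B = clip (coordB x); I = clip (coordI x); M = clip (coordM x); N = clip (coordN x);
         S = max S_lower (B + I)
     in (fB B I M N S, fI B I M N S, fM B I M N S, fN B I M N S))"

lemma trunc_field_lipschitz: "\<exists>L. L-lipschitz_on UNIV trunc_field"
proof -
  note clipped = bounded_lipschitz_on_clip[OF lipschitz_on_coords(1)]
    bounded_lipschitz_on_clip[OF lipschitz_on_coords(2)]
    bounded_lipschitz_on_clip[OF lipschitz_on_coords(3)]
    bounded_lipschitz_on_clip[OF lipschitz_on_coords(4)]
  have "bounded_lipschitz_on UNIV (\<lambda>x. max S_lower (clip (coordB x) + clip (coordI x)))"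
    by (intro bounded_lipschitz_on_max_const bounded_lipschitz_on_add clipped)
  then show ?thesis
    unfolding trunc_field_def Let_def
    by (intro lipschitz_on_Pair4; rule bounded_lipschitz_on_rates[OF clipped _ S_lower_pos])
      (use S_lower_pos in auto)
qed

lemma trunc_total_bees_rate_nonpos_above:
  assumes "B \<ge> 0" "I \<ge> 0" "B + I > S_upper"
  defines "S \<equiv> max S_lower (clip B + clip I)"
  shows "fB (clip B) (clip I) M N S + fI (clip B) (clip I) M N S \<le> 0"
proof -
  have "clip B + clip I \<ge> S_upper"
    using clip_ge_min[OF assms(1)] clip_ge_min[OF assms(2)] clip_nonneg[of B] clip_nonneg[of I]
      clip_bound_ge(1) assms(3) by linarith
  then have "S = clip B + clip I"
    using S_lower_le_S_upper by (simp add: S_def)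
  then have "fB (clip B) (clip I) M N S + fI (clip B) (clip I) M N S
      = b - m * (clip B + clip I) - mu * clip I"
    using \<open>clip B + clip I \<ge> S_upper\<close> S_upper_pos by (simp add: fB_plus_fI)
  also have "\<dots> \<le> b - m * S_upper"
    using \<open>clip B + clip I \<ge> S_upper\<close> clip_nonneg[of I] pos
    by (smt (verit) mult_left_mono mult_nonneg_nonneg)
  also have "\<dots> \<le> 0"
    using S_upper_ge(1) pos by (simp add: field_simps)
  finally show ?thesis .
qed

lemma trunc_total_bees_rate_nonneg_below:
  assumes "B \<ge> 0" "I \<ge> 0" "B + I < S_lower"
  defines "S \<equiv> max S_lower (clip B + clip I)"
  shows "fB (clip B) (clip I) M N S + fI (clip B) (clip I) M N S \<ge> 0"
proof -
  have "clip B = B" "clip I = I"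
    using assms(1-3) S_lower_le_S_upper clip_bound_ge(1) by (auto intro!: clip_id)
  then have "S = S_lower"
    using assms(3) by (simp add: S_def)
  have "(m + mu) * (B + I) \<le> b / S_lower * (B + I)"
    using S_lower_pos S_lower_le(1) pos assms(1,2) by (intro mult_right_mono) (simp_all add: field_simps)
  then have "b * (B + I) / S_lower - m * (B + I) - mu * I \<ge> 0"
    using assms(1) pos by (simp add: algebra_simps) (smt (verit) mult_nonneg_nonneg)
  then show ?thesis
    using \<open>clip B = B\<close> \<open>clip I = I\<close> \<open>S = S_lower\<close> by (simp add: fB_plus_fI)
qed

text \<open>Above mites_upper the logistic term p (M + N) / (h S) exceeds r, since S \<le> S_upper.\<close>
lemma trunc_total_mites_rate_nonpos_above:
  assumes "B \<ge> 0" "I \<ge> 0" "M \<ge> 0" "N \<ge> 0" "B + I \<le> S_upper" "M + N > mites_upper"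
  defines "S \<equiv> max S_lower (clip B + clip I)"
  shows "fM (clip B) (clip I) (clip M) (clip N) S + fN (clip B) (clip I) (clip M) (clip N) S \<le> 0"
proof -
  have MN: "clip M + clip N \<ge> mites_upper"
    using clip_ge_min[OF assms(3)] clip_ge_min[OF assms(4)] clip_nonneg[of M] clip_nonneg[of N]
      clip_bound_ge(2) assms(6) by linarith
  have "clip B + clip I \<le> S_upper"
    using clip_le_self[OF assms(1)] clip_le_self[OF assms(2)] assms(5) by linarith
  then have S: "S_lower \<le> S" "S \<le> S_upper"
    using S_lower_le_S_upper by (auto simp: S_def)
  have "r = p / (h * S_upper) * (h * S_upper * r / p)"
    using S_upper_pos pos by (simp add: field_simps)
  also have "\<dots> \<le> p / (h * S_upper) * mites_upper"
    using mites_upper_ge(2) S_upper_pos pos by (intro mult_left_mono) auto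
  also have "\<dots> \<le> p / (h * S) * (clip M + clip N)"
    using S S_lower_pos MN mites_upper_pos pos
    by (intro mult_mono divide_left_mono mult_left_mono mult_pos_pos) auto
  finally have "(r - n) - p / (h * S) * (clip M + clip N) - e * clip B \<le> 0"
    using pos clip_nonneg[of B] by (smt (verit) mult_nonneg_nonneg)
  then show ?thesis
    using clip_nonneg[of M] clip_nonneg[of N] by (simp add: fM_plus_fN mult_nonneg_nonpos)
qed

end

locale truncated_trajectory = bee_system +
  fixes X :: "real \<Rightarrow> real \<times> real \<times> real \<times> real"
  assumes X_0: "X 0 = (B0, I0, M0, N0)"
    and X_deriv: "\<And>t. 0 \<le> t \<Longrightarrow> (X has_vector_derivative trunc_field (X t)) (at t within {0..})"
begin

definition "Bx t = coordB (X t)"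
definition "Ix t = coordI (X t)"
definition "Mx t = coordM (X t)"
definition "Nx t = coordN (X t)"
definition "Sx t = max S_lower (clip (Bx t) + clip (Ix t))"

abbreviation "rate f t \<equiv> f (clip (Bx t)) (clip (Ix t)) (clip (Mx t)) (clip (Nx t)) (Sx t)"

lemma trajectory_at_0: "Bx 0 = B0" "Ix 0 = I0" "Mx 0 = M0" "Nx 0 = N0"
  by (simp_all add: Bx_def Ix_def Mx_def Nx_def X_0)

lemma trajectory_has_derivatives:
  assumes "0 \<le> t"
  shows "(Bx has_real_derivative rate fB t) (at t within {0..})"
    "(Ix has_real_derivative rate fI t) (at t within {0..})"
    "(Mx has_real_derivative rate fM t) (at t within {0..})"
    "(Nx has_real_derivative rate fN t) (at t within {0..})"
proof -
  have "trunc_field (X t) = (rate fB t, rate fI t, rate fM t, rate fN t)"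
    by (simp add: trunc_field_def Let_def Sx_def Bx_def Ix_def Mx_def Nx_def)
  then show "(Bx has_real_derivative rate fB t) (at t within {0..})"
    "(Ix has_real_derivative rate fI t) (at t within {0..})"
    "(Mx has_real_derivative rate fM t) (at t within {0..})"
    "(Nx has_real_derivative rate fN t) (at t within {0..})"
    using has_real_derivative_coords[OF X_deriv[OF assms]]
    by (simp_all add: Bx_def[abs_def] Ix_def[abs_def] Mx_def[abs_def] Nx_def[abs_def])
qed

text \<open>Where a coordinate is negative it is clipped to 0, which kills its own rate of decrease.\<close>
lemma trajectory_nonneg:
  assumes "0 \<le> t"
  shows "Bx t \<ge> 0" "Ix t \<ge> 0" "Mx t \<ge> 0" "Nx t \<ge> 0"
proof -
  show "Bx t \<ge> 0"
    by (rule lower_barrier[OF trajectory_has_derivatives(1) _ _ assms])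
      (simp_all add: trajectory_at_0 init_nonneg fB_def clip_of_nonpos)
  show "Ix t \<ge> 0"
    by (rule lower_barrier[OF trajectory_has_derivatives(2) _ _ assms])
      (use pos in \<open>simp_all add: trajectory_at_0 init_nonneg fI_def clip_of_nonpos clip_nonneg\<close>)
  show "Mx t \<ge> 0"
    by (rule lower_barrier[OF trajectory_has_derivatives(3) _ _ assms])
      (use pos in \<open>simp_all add: trajectory_at_0 init_nonneg fM_def clip_of_nonpos clip_nonneg\<close>)
  show "Nx t \<ge> 0"
    by (rule lower_barrier[OF trajectory_has_derivatives(4) _ _ assms])
      (use pos in \<open>simp_all add: trajectory_at_0 init_nonneg fN_def clip_of_nonpos clip_nonneg\<close>)
qed

lemma trajectory_total_bees_bounds:
  assumes "0 \<le> t"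
  shows "S_lower \<le> Bx t + Ix t" "Bx t + Ix t \<le> S_upper"
proof -
  have deriv: "((\<lambda>t. Bx t + Ix t) has_real_derivative rate fB t + rate fI t) (at t within {0..})"
    if "0 \<le> t" for t
    using trajectory_has_derivatives(1,2)[OF that] by (rule DERIV_add)
  show "S_lower \<le> Bx t + Ix t"
  proof (rule lower_barrier[OF deriv _ _ assms])
    show "S_lower \<le> Bx 0 + Ix 0"
      using S_lower_le(2) by (simp add: trajectory_at_0)
    show "0 \<le> rate fB s + rate fI s" if "0 \<le> s" "Bx s + Ix s < S_lower" for s
      using trunc_total_bees_rate_nonneg_below[of "Bx s" "Ix s" "clip (Mx s)" "clip (Nx s)"] trajectory_nonneg[OF that(1)] that(2)
      by (simp add: Sx_def)
  qed
  have "- S_upper \<le> - (Bx t + Ix t)"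
  proof (rule lower_barrier[OF DERIV_minus[OF deriv] _ _ assms])
    show "- S_upper \<le> - (Bx 0 + Ix 0)"
      using S_upper_ge(2) by (simp add: trajectory_at_0)
    show "0 \<le> - (rate fB s + rate fI s)" if "0 \<le> s" "- (Bx s + Ix s) < - S_upper" for s
      using trunc_total_bees_rate_nonpos_above[of "Bx s" "Ix s" "clip (Mx s)" "clip (Nx s)"] trajectory_nonneg[OF that(1)] that(2)
      by (simp add: Sx_def)
  qed
  then show "Bx t + Ix t \<le> S_upper"
    by simp
qed

lemma trajectory_total_mites_bound:
  assumes "0 \<le> t"
  shows "Mx t + Nx t \<le> mites_upper"
proof -
  have "- mites_upper \<le> - (Mx t + Nx t)"
  proof (rule lower_barrier[OF DERIV_minus[OF DERIV_add[OF trajectory_has_derivatives(3,4)]] _ _ assms])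
    show "- mites_upper \<le> - (Mx 0 + Nx 0)"
      using mites_upper_ge(1) by (simp add: trajectory_at_0)
    show "0 \<le> - (rate fM s + rate fN s)" if "0 \<le> s" "- (Mx s + Nx s) < - mites_upper" for s
      using trunc_total_mites_rate_nonpos_above[of "Bx s" "Ix s" "Mx s" "Nx s"] trajectory_nonneg[OF that(1)]
        trajectory_total_bees_bounds(2)[OF that(1)] that(2)
      by (simp add: Sx_def)
  qed
  then show ?thesis
    by simp
qed

lemma trajectory_unclipped:
  assumes "0 \<le> t"
  shows "clip (Bx t) = Bx t" "clip (Ix t) = Ix t" "clip (Mx t) = Mx t" "clip (Nx t) = Nx t"
    "Sx t = Bx t + Ix t"
proof -
  note bounds = trajectory_nonneg[OF assms] trajectory_total_bees_bounds[OF assms]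
    trajectory_total_mites_bound[OF assms] clip_bound_ge
  show "clip (Bx t) = Bx t" "clip (Ix t) = Ix t" "clip (Mx t) = Mx t" "clip (Nx t) = Nx t"
    using bounds by (simp_all add: clip_id)
  then show "Sx t = Bx t + Ix t"
    using bounds by (simp add: Sx_def)
qed

lemma trajectory_bee_solution: "bee_solution b lam gam m mu r n p h beta delta e Bx Ix Mx Nx"
  unfolding bee_solution_def
proof (intro allI impI conjI)
  fix t :: real assume "0 \<le> t"
  show "Bx t + Ix t \<noteq> 0"
    using trajectory_total_bees_bounds[OF \<open>0 \<le> t\<close>] S_lower_pos by simp
  note derivs = trajectory_has_derivatives[OF \<open>0 \<le> t\<close>, unfolded trajectory_unclipped[OF \<open>0 \<le> t\<close>]]
  show "(Bx has_real_derivative b * Bx t / (Bx t + Ix t) - lam * Bx t * Nx t - gam * Bx t * Ix t - m * Bx t)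
      (at t within {0..})"
    using derivs(1) by (simp add: fB_def)
  show "(Ix has_real_derivative b * Ix t / (Bx t + Ix t) + lam * Bx t * Nx t + gam * Bx t * Ix t - (m + mu) * Ix t)
      (at t within {0..})"
    using derivs(2) by (simp add: fI_def)
  show "(Mx has_real_derivative r * (Mx t + Nx t) - n * Mx t - p / (h * (Bx t + Ix t)) * Mx t * (Mx t + Nx t)
      - Mx t * (beta * Ix t + delta * Nx t + e * Bx t)) (at t within {0..})"
    using derivs(3) by (simp add: fM_def)
  show "(Nx has_real_derivative - n * Nx t - p / (h * (Bx t + Ix t)) * Nx t * (Mx t + Nx t) + beta * Mx t * Ix t
      + delta * Mx t * Nx t - e * Nx t * Bx t) (at t within {0..})"
    using derivs(4) by (simp add: fN_def)
qed

end

lemma (in bee_system) bee_solution_exists: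
  obtains B I M N where "bee_solution b lam gam m mu r n p h beta delta e B I M N"
    "(B 0, I 0, M 0, N 0) = (B0, I0, M0, N0)"
    "\<And>t. 0 \<le> t \<Longrightarrow> (B t, I t, M t, N t) \<in> D0" "\<And>t. 0 \<le> t \<Longrightarrow> M t + N t \<le> mites_upper"
proof -
  obtain L where "L-lipschitz_on UNIV trunc_field"
    using trunc_field_lipschitz by blast
  then obtain X where "X 0 = (B0, I0, M0, N0)"
    and "\<And>t. 0 \<le> t \<Longrightarrow> (X has_vector_derivative trunc_field (X t)) (at t within {0..})"
    using ode_global_solution_exists by blast
  then interpret truncated_trajectory b lam gam m mu r n p h beta delta e B0 I0 M0 N0 X
    by unfold_locales
  have "(Bx t, Ix t, Mx t, Nx t) \<in> D0" if "0 \<le> t" for t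
    using trajectory_nonneg[OF that] trajectory_total_bees_bounds(1)[OF that] S_lower_pos
    by (simp add: D0_def)
  then show thesis
    using that trajectory_bee_solution trajectory_at_0 trajectory_total_mites_bound by simp
qed

theorem theorem1:
  fixes b lam gam m mu r n p h beta delta e :: real
    and B0 I0 M0 N0 :: real
  assumes "b > 0" "lam > 0" "gam > 0" "m > 0" "mu > 0" "r > 0" "n > 0" "p > 0" "h > 0"
    "beta > 0" "delta > 0" "e > 0"
    and "(B0, I0, M0, N0) \<in> D0"
  shows "\<exists>B I M N.
     bee_solution b lam gam m mu r n p h beta delta e B I M N \<and>
     (B 0, I 0, M 0, N 0) = (B0, I0, M0, N0) \<and>
     (\<forall>B' I' M' N'. bee_solution b lam gam m mu r n p h beta delta e B' I' M' N' \<and>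
        (B' 0, I' 0, M' 0, N' 0) = (B0, I0, M0, N0) \<longrightarrow>
        (\<forall>t\<ge>0. B' t = B t \<and> I' t = I t \<and> M' t = M t \<and> N' t = N t)) \<and>
     (\<forall>t>0. (B t, I t, M t, N t) \<in> D0) \<and>
     ereal (b / (m + mu)) \<le> Liminf at_top (\<lambda>t. ereal (B t + I t)) \<and>
     Liminf at_top (\<lambda>t. ereal (B t + I t)) \<le> Limsup at_top (\<lambda>t. ereal (B t + I t)) \<and>
     Limsup at_top (\<lambda>t. ereal (B t + I t)) \<le> ereal (b / m) \<and>
     (\<exists>L>0. \<forall>t\<ge>0. M t + N t \<le> L)"
proof -
  interpret bee_system b lam gam m mu r n p h beta delta e B0 I0 M0 N0
    using assms by unfold_locales auto
  obtain B I M N where sol: "bee_solution b lam gam m mu r n p h beta delta e B I M N"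
    and init: "(B 0, I 0, M 0, N 0) = (B0, I0, M0, N0)"
    and in_D0: "\<And>t. 0 \<le> t \<Longrightarrow> (B t, I t, M t, N t) \<in> D0"
    and mites_bounded: "\<And>t. 0 \<le> t \<Longrightarrow> M t + N t \<le> mites_upper"
    using bee_solution_exists by blast
  have "B t \<ge> 0 \<and> I t \<ge> 0" if "t \<ge> 0" for t
    using in_D0[OF that] by (simp add: D0_def)
  note asymptotics = total_bees_asymptotics[OF sol this]
  have unique: "\<forall>B' I' M' N'. bee_solution b lam gam m mu r n p h beta delta e B' I' M' N' \<and>
      (B' 0, I' 0, M' 0, N' 0) = (B0, I0, M0, N0) \<longrightarrow>
      (\<forall>t\<ge>0. B' t = B t \<and> I' t = I t \<and> M' t = M t \<and> N' t = N t)"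
    using init by (intro allI impI, elim conjE) (rule bee_solution_unique[OF sol]; simp)
  have "Liminf at_top (\<lambda>t. ereal (B t + I t)) \<le> Limsup at_top (\<lambda>t. ereal (B t + I t))"
    by (rule Liminf_le_Limsup) simp
  moreover have "\<exists>L>0. \<forall>t\<ge>0. M t + N t \<le> L"
    using mites_bounded mites_upper_pos by (intro exI[of _ mites_upper]) simp
  moreover have "\<forall>t>0. (B t, I t, M t, N t) \<in> D0"
    using in_D0 by simp
  ultimately show ?thesis
    by (intro exI[of _ B] exI[of _ I] exI[of _ M] exI[of _ N] conjI sol init unique asymptotics)
qed

end
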